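(* Given a neural network $f$ and an input $\mathbf{x} = \langle x_1, \ldots, x_m \rangle$ where $m \geq 2$, the time complexity of $\textsc{qXp}(\emptyset, \emptyset, \mathbf{x})$ is $\lfloor \log_2 m \rfloor + 1$ calls of $\textsc{checkValid}$ for the best case (all features are irrelevant) and $(m-1) \times 2$ calls of $\textsc{checkValid}$ for the worst case (all features are in explanation). When $m = 1$, it needs $1$ $\textsc{checkValid}$ call.
   Context: $f$ is a neural network (classifier or regressor), $\mathbf{x}$ an input with $m$ features, $\epsilon$ a perturbation magnitude and $p$ a norm. The oracle $\textsc{checkValid}(f, \mathbf{x}, \mathbf{x}_S)$ returns True iff every input obtained from $\mathbf{x}$ by perturbing the features in $\mathbf{x}_S$ within $\epsilon$ (in $p$-norm) while keeping all other features fixed yields the same prediction as $\mathbf{x}$ (same class, or output within $\delta$ for regression); such features are irrelevant, the others form the explanation. The recursive function $\textsc{qXp}(\mathbf{x}_\alpha, \mathbf{x}_\beta, \mathbf{x}_\Theta)$ (current explanation, current irrelevant set, features still to analyze) returns a pair (explanation features, irrelevant set) and does: if $|\mathbf{x}_\Theta|=1$, return $(\emptyset, \mathbf{x}_\beta\cup\mathbf{x}_\Theta)$ if $\textsc{checkValid}(f,\mathbf{x},\mathbf{x}_\beta\cup\mathbf{x}_\Theta)$ is True, else $(\mathbf{x}_\Theta,\mathbf{x}_\beta)$. Otherwise split $\mathbf{x}_\Theta$ into halves $\mathbf{x}_\Phi,\mathbf{x}_\Psi$ (with $|\mathbf{x}_\Phi|=|\mathbf{x}_\Psi|+1$ when odd).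 If $\textsc{checkValid}(f,\mathbf{x},\mathbf{x}_\beta\cup\mathbf{x}_\Phi)$ is True, return $\textsc{qXp}(\mathbf{x}_\alpha,\mathbf{x}_\beta\cup\mathbf{x}_\Phi,\mathbf{x}_\Psi)$; else if $\textsc{checkValid}(f,\mathbf{x},\mathbf{x}_\beta\cup\mathbf{x}_\Psi)$ is True, return $\textsc{qXp}(\mathbf{x}_\alpha,\mathbf{x}_\beta\cup\mathbf{x}_\Psi,\mathbf{x}_\Phi)$; else: if $|\mathbf{x}_\Phi|=1$ set $(\mathbf{x}_\Phi',\mathbf{x}_\beta')=(\mathbf{x}_\Phi,\mathbf{x}_\beta)$, otherwise $(\mathbf{x}_\Phi',\mathbf{x}_\beta')=\textsc{qXp}(\mathbf{x}_\alpha\cup\mathbf{x}_\Psi,\mathbf{x}_\beta,\mathbf{x}_\Phi)$; if $|\mathbf{x}_\Psi|=1$ set $(\mathbf{x}_\Psi',\mathbf{x}_\beta'')=(\mathbf{x}_\Psi,\mathbf{x}_\beta')$, otherwise $(\mathbf{x}_\Psi',\mathbf{x}_\beta'')=\textsc{qXp}(\mathbf{x}_\alpha\cup\mathbf{x}_\Phi',\mathbf{x}_\beta',\mathbf{x}_\Psi)$; return $(\mathbf{x}_\Phi'\cup\mathbf{x}_\Psi',\mathbf{x}_\beta'')$. *)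

theory Defs
  imports Complex_Main "HOL-Library.Extended_Real"
begin

definition pnorm :: "ereal \<Rightarrow> nat set \<Rightarrow> (nat \<Rightarrow> real) \<Rightarrow> real" where
  "pnorm p S d = (if p = \<infinity> then (if S = {} then 0 else Max ((\<lambda>i. \<bar>d i\<bar>) ` S))
                  else (\<Sum>i\<in>S. \<bar>d i\<bar> powr real_of_ereal p) powr (1 / real_of_ereal p))"

text \<open>The oracle checkValid. f maps inputs (feature vectors nat => real, features indexed
  0..<m) to outputs; same o o' says that o' counts as the same prediction as o
  (equality of class for classifiers, |o - o'| \<le> \<delta> for regressors).\<close>
definition checkValid ::
  "((nat \<Rightarrow> real) \<Rightarrow> 'b) \<Rightarrow> ('b \<Rightarrow> 'b \<Rightarrow> bool) \<Rightarrow> ereal \<Rightarrow> real \<Rightarrow> (nat \<Rightarrow> real) \<Rightarrow> nat set \<Rightarrow> bool" where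
  "checkValid f same p eps x S =
     (\<forall>x'. (\<forall>i. i \<notin> S \<longrightarrow> x' i = x i) \<longrightarrow> pnorm p S (\<lambda>i. x' i - x i) \<le> eps
          \<longrightarrow> same (f x) (f x'))"

text \<open>qXp, instrumented: qXp cv alpha beta theta returns (explanation features, irrelevant set,
  number of calls to the oracle cv). Sets are represented by lists (order fixes the split).\<close>
function qXp :: "(nat set \<Rightarrow> bool) \<Rightarrow> nat list \<Rightarrow> nat list \<Rightarrow> nat list \<Rightarrow> nat list \<times> nat list \<times> nat" where
  "qXp cv \<alpha> \<beta> \<Theta> =
    (if length \<Theta> \<le> 1 then
       (if \<Theta> = [] then ([], \<beta>, 0)
        else if cv (set \<beta> \<union> set \<Theta>) then ([], \<beta> @ \<Theta>, 1) else (\<Theta>, \<beta>, 1))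
     else
       (let \<Phi> = take ((length \<Theta> + 1) div 2) \<Theta>; \<Psi> = drop ((length \<Theta> + 1) div 2) \<Theta> in
        if cv (set \<beta> \<union> set \<Phi>) then
          (case qXp cv \<alpha> (\<beta> @ \<Phi>) \<Psi> of (e, b, c) \<Rightarrow> (e, b, c + 1))
        else if cv (set \<beta> \<union> set \<Psi>) then
          (case qXp cv \<alpha> (\<beta> @ \<Psi>) \<Phi> of (e, b, c) \<Rightarrow> (e, b, c + 2))
        else
          (case (if length \<Phi> = 1 then (\<Phi>, \<beta>, 0) else qXp cv (\<alpha> @ \<Psi>) \<beta> \<Phi>) of
             (\<Phi>', \<beta>', c1) \<Rightarrow>
               (case (if length \<Psi> = 1 then (\<Psi>, \<beta>', 0) else qXp cv (\<alpha> @ \<Phi>') \<beta>' \<Psi>) of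
                  (\<Psi>', \<beta>'', c2) \<Rightarrow> (\<Phi>' @ \<Psi>', \<beta>'', c1 + c2 + 2)))))"
  by pat_completeness auto
termination
  by (relation "measure (\<lambda>(cv, \<alpha>, \<beta>, \<Theta>). length \<Theta>)") auto

definition qXp_calls :: "(nat set \<Rightarrow> bool) \<Rightarrow> nat list \<Rightarrow> nat" where
  "qXp_calls cv xs = snd (snd (qXp cv [] [] xs))"

end

theory Submission
  imports Defs "HOL-Library.Log_Nat"
begin

text \<open>If every feature may be perturbed, each split succeeds on its first check and qXp recurses
  only into the second half, of length \<open>\<lfloor>n/2\<rfloor>\<close>: one call per halving, \<open>\<lfloor>log\<^sub>2 n\<rfloor> + 1\<close> in
  total.  If no feature may be perturbed, both checks of every split fail and qXp recurses into
  both halves, except that a half of length one is taken into the explanation without a further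
  call; so the cost satisfies \<open>C(a + b) = C(a) + C(b) + 2\<close> with \<open>C(1) = 0\<close>, i.e.
  \<open>C(n) = 2(n - 1)\<close>.  The hypotheses, stated for one set of features, transfer to all sets
  queried during the recursion because validity is inherited by subsets.\<close>

declare qXp.simps [simp del]

abbreviation qXp_count :: "(nat set \<Rightarrow> bool) \<Rightarrow> nat list \<Rightarrow> nat list \<Rightarrow> nat list \<Rightarrow> nat" where
  "qXp_count cv \<alpha> \<beta> \<Theta> \<equiv> snd (snd (qXp cv \<alpha> \<beta> \<Theta>))"

lemma pnorm_mono_neutral_right:
  assumes "finite T" "S \<subseteq> T" "\<forall>i \<in> T - S. d i = 0"
  shows "pnorm p T d = pnorm p S d"
proof (cases "p = \<infinity>")
  case True
  let ?A = "\<lambda>S. (\<lambda>i. \<bar>d i\<bar>) ` S"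
  have "finite S" using assms(1,2) by (rule rev_finite_subset)
  have "Max (?A T) = Max (?A S)" if "S \<noteq> {}"
  proof (rule antisym)
    have "\<bar>d i\<bar> \<le> Max (?A S)" if "i \<in> T" for i
    proof (cases "i \<in> S")
      case False
      obtain j where "j \<in> S" using \<open>S \<noteq> {}\<close> by blast
      then have "0 \<le> Max (?A S)"
        using \<open>finite S\<close> by (meson Max_ge abs_ge_zero finite_imageI image_eqI order.trans)
      then show ?thesis using False \<open>i \<in> T\<close> assms(3) by simp
    qed (use \<open>finite S\<close> in auto)
    then show "Max (?A T) \<le> Max (?A S)" using assms(1,2) that by (subst Max_le_iff) auto
    show "Max (?A S) \<le> Max (?A T)" using assms(1,2) that by (intro Max_mono) auto
  qed
  moreover have "Max (?A T) = 0" if "S = {}" "T \<noteq> {}"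
  proof -
    have "?A T = {0}" using that assms(3) by auto
    then show ?thesis by simp
  qed
  ultimately show ?thesis using True assms(2) by (auto simp: pnorm_def)
next
  case False
  have "(\<Sum>i\<in>T. \<bar>d i\<bar> powr real_of_ereal p) = (\<Sum>i\<in>S. \<bar>d i\<bar> powr real_of_ereal p)"
    using assms by (intro sum.mono_neutral_right) auto
  then show ?thesis using False by (simp add: pnorm_def)
qed

lemma checkValid_subset:
  assumes "checkValid f same p eps x T" "S \<subseteq> T" "finite T"
  shows "checkValid f same p eps x S"
  unfolding checkValid_def
proof (intro allI impI)
  fix x'
  assume fixed: "\<forall>i. i \<notin> S \<longrightarrow> x' i = x i" and small: "pnorm p S (\<lambda>i. x' i - x i) \<le> eps"
  have "pnorm p T (\<lambda>i. x' i - x i) = pnorm p S (\<lambda>i. x' i - x i)"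
    using assms(2,3) fixed by (intro pnorm_mono_neutral_right) auto
  moreover have "\<forall>i. i \<notin> T \<longrightarrow> x' i = x i" using fixed assms(2) by blast
  ultimately show "same (f x) (f x')"
    using assms(1) small unfolding checkValid_def by (metis (no_types, lifting))
qed

lemma qXp_count_singleton: "qXp_count cv \<alpha> \<beta> [a] = 1"
  by (subst qXp.simps) simp

lemma qXp_count_first_half_valid:
  fixes \<Theta> :: "nat list"
  defines "h \<equiv> (length \<Theta> + 1) div 2"
  assumes "2 \<le> length \<Theta>" "cv (set \<beta> \<union> set (take h \<Theta>))"
  shows "qXp_count cv \<alpha> \<beta> \<Theta> = qXp_count cv \<alpha> (\<beta> @ take h \<Theta>) (drop h \<Theta>) + 1"
  using assms by (subst qXp.simps) (simp add: Let_def split: prod.split)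

lemma qXp_count_both_halves_invalid:
  fixes cv :: "nat set \<Rightarrow> bool" and \<alpha> \<beta> \<Theta> :: "nat list"
  defines "h \<equiv> (length \<Theta> + 1) div 2"
  defines "\<Phi> \<equiv> take h \<Theta>" and "\<Psi> \<equiv> drop h \<Theta>"
  defines "r \<equiv> (if length \<Phi> = 1 then (\<Phi>, \<beta>, 0) else qXp cv (\<alpha> @ \<Psi>) \<beta> \<Phi>)"
  assumes "2 \<le> length \<Theta>" "\<not> cv (set \<beta> \<union> set \<Phi>)" "\<not> cv (set \<beta> \<union> set \<Psi>)"
  shows "qXp_count cv \<alpha> \<beta> \<Theta> = snd (snd r)
           + (if length \<Psi> = 1 then 0 else qXp_count cv (\<alpha> @ fst r) (fst (snd r)) \<Psi>) + 2"
  using assms by (subst qXp.simps) (simp add: Let_def split: prod.split)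

lemma qXp_count_all_valid:
  assumes "\<Theta> \<noteq> []" "\<And>S. S \<subseteq> set \<beta> \<union> set \<Theta> \<Longrightarrow> cv S"
  shows "int (qXp_count cv \<alpha> \<beta> \<Theta>) = \<lfloor>log 2 (real (length \<Theta>))\<rfloor> + 1"
  using assms
proof (induction "length \<Theta>" arbitrary: \<beta> \<Theta> rule: less_induct)
  case less
  show ?case
  proof (cases "length \<Theta> \<le> 1")
    case True
    then obtain a where "\<Theta> = [a]" using less.prems(1) by (cases \<Theta>) auto
    then show ?thesis by (simp add: qXp_count_singleton)
  next
    case False
    define h where "h = (length \<Theta> + 1) div 2"
    have halves: "set \<beta> \<union> set \<Theta> = set (\<beta> @ take h \<Theta>) \<union> set (drop h \<Theta>)"
      by (metis append_take_drop_id set_append sup_assoc)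
    have "cv (set \<beta> \<union> set (take h \<Theta>))" using halves less.prems(2) by auto
    then have "qXp_count cv \<alpha> \<beta> \<Theta> = qXp_count cv \<alpha> (\<beta> @ take h \<Theta>) (drop h \<Theta>) + 1"
      using False qXp_count_first_half_valid h_def by simp
    moreover have "int (qXp_count cv \<alpha> (\<beta> @ take h \<Theta>) (drop h \<Theta>))
        = \<lfloor>log 2 (real (length \<Theta> div 2))\<rfloor> + 1"
    proof -
      have "length (drop h \<Theta>) = length \<Theta> div 2" by (simp add: h_def)
      then show ?thesis
        using less.hyps[of "drop h \<Theta>" "\<beta> @ take h \<Theta>"] less.prems(2) False halves by simp
    qed
    moreover have "\<lfloor>log 2 (real (length \<Theta>))\<rfloor> = \<lfloor>log 2 (real (length \<Theta> div 2))\<rfloor> + 1"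
      using floor_log_div[of 2 "length \<Theta>"] False less.prems(1) by simp
    ultimately show ?thesis by simp
  qed
qed

lemma qXp_count_all_invalid:
  assumes "2 \<le> length \<Theta>" "\<And>S. finite S \<Longrightarrow> S \<inter> set \<Theta> \<noteq> {} \<Longrightarrow> \<not> cv S"
  shows "qXp_count cv \<alpha> \<beta> \<Theta> = (length \<Theta> - 1) * 2"
  using assms
proof (induction "length \<Theta>" arbitrary: \<alpha> \<beta> \<Theta> rule: less_induct)
  case less
  define h where "h = (length \<Theta> + 1) div 2"
  define \<Phi> where "\<Phi> = take h \<Theta>"
  define \<Psi> where "\<Psi> = drop h \<Theta>"
  have lengths: "length \<Phi> = (length \<Theta> + 1) div 2" "length \<Psi> = length \<Theta> div 2"
    using less.prems(1) by (simp_all add: \<Phi>_def \<Psi>_def h_def)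
  have "set \<Phi> \<subseteq> set \<Theta>" "set \<Psi> \<subseteq> set \<Theta>"
    by (simp_all add: \<Phi>_def \<Psi>_def set_take_subset set_drop_subset)
  then have invalid_\<Phi>: "\<And>S. finite S \<Longrightarrow> S \<inter> set \<Phi> \<noteq> {} \<Longrightarrow> \<not> cv S"
    and invalid_\<Psi>: "\<And>S. finite S \<Longrightarrow> S \<inter> set \<Psi> \<noteq> {} \<Longrightarrow> \<not> cv S"
    using less.prems(2) by blast+
  have shorter: "length \<Phi> < length \<Theta>" "length \<Psi> < length \<Theta>"
    and nonempty: "0 < length \<Phi>" "0 < length \<Psi>"
    using lengths less.prems(1) by simp_all
  have half_count: "(if length \<Xi> = 1 then 0 else qXp_count cv \<alpha>' \<beta>' \<Xi>) = (length \<Xi> - 1) * 2"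
    if "length \<Xi> < length \<Theta>" "0 < length \<Xi>" "\<And>S. finite S \<Longrightarrow> S \<inter> set \<Xi> \<noteq> {} \<Longrightarrow> \<not> cv S"
    for \<Xi> \<alpha>' \<beta>'
  proof (cases "length \<Xi> = 1")
    case False
    then have "2 \<le> length \<Xi>" using that(2) by linarith
    then have "qXp_count cv \<alpha>' \<beta>' \<Xi> = (length \<Xi> - 1) * 2"
      using that by (intro less.hyps) auto
    then show ?thesis using False by simp
  qed simp
  have "\<not> cv (set \<beta> \<union> set \<Phi>)" using nonempty(1) by (intro invalid_\<Phi>) auto
  moreover have "\<not> cv (set \<beta> \<union> set \<Psi>)" using nonempty(2) by (intro invalid_\<Psi>) auto
  moreover define r where "r = (if length \<Phi> = 1 then (\<Phi>, \<beta>, 0) else qXp cv (\<alpha> @ \<Psi>) \<beta> \<Phi>)"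
  ultimately have "qXp_count cv \<alpha> \<beta> \<Theta> = snd (snd r)
      + (if length \<Psi> = 1 then 0 else qXp_count cv (\<alpha> @ fst r) (fst (snd r)) \<Psi>) + 2"
    using less.prems(1) unfolding r_def \<Phi>_def \<Psi>_def h_def by (intro qXp_count_both_halves_invalid)
  moreover have "snd (snd r) = (length \<Phi> - 1) * 2"
    using half_count[OF shorter(1) nonempty(1) invalid_\<Phi>, of "\<alpha> @ \<Psi>" \<beta>]
    by (simp add: r_def split: if_split_asm)
  ultimately have "qXp_count cv \<alpha> \<beta> \<Theta> = (length \<Phi> - 1) * 2 + (length \<Psi> - 1) * 2 + 2"
    using half_count[OF shorter(2) nonempty(2) invalid_\<Psi>] by simp
  moreover have "length \<Phi> + length \<Psi> = length \<Theta>" using lengths by simp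
  ultimately show ?case using nonempty by arith
qed

theorem theorem2:
  fixes f :: "(nat \<Rightarrow> real) \<Rightarrow> 'b" and same :: "'b \<Rightarrow> 'b \<Rightarrow> bool"
    and p :: ereal and eps :: real and x :: "nat \<Rightarrow> real" and m :: nat
  defines "cv \<equiv> checkValid f same p eps x"
  shows "(m \<ge> 2 \<longrightarrow> cv {0..<m} \<longrightarrow>
            int (qXp_calls cv [0..<m]) = \<lfloor>log 2 (real m)\<rfloor> + 1)
       \<and> (m \<ge> 2 \<longrightarrow> (\<forall>i<m. \<not> cv {i}) \<longrightarrow>
            qXp_calls cv [0..<m] = (m - 1) * 2)
       \<and> (m = 1 \<longrightarrow> qXp_calls cv [0..<m] = 1)"
proof (intro conjI impI)
  assume "m \<ge> 2" "cv {0..<m}"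
  then have "cv S" if "S \<subseteq> {0..<m}" for S
    using that checkValid_subset unfolding cv_def by blast
  then show "int (qXp_calls cv [0..<m]) = \<lfloor>log 2 (real m)\<rfloor> + 1"
    using qXp_count_all_valid[of "[0..<m]" "[]" cv] \<open>m \<ge> 2\<close> by (simp add: qXp_calls_def)
next
  assume "m \<ge> 2" "\<forall>i<m. \<not> cv {i}"
  have "\<not> cv S" if "finite S" and meets: "S \<inter> {0..<m} \<noteq> {}" for S
  proof
    assume "cv S"
    obtain i where "i \<in> S" "i < m" using meets by auto
    then show False
      using checkValid_subset[of f same p eps x S "{i}"] \<open>cv S\<close> \<open>\<forall>i<m. \<not> cv {i}\<close> \<open>finite S\<close>
      unfolding cv_def by auto
  qed
  then show "qXp_calls cv [0..<m] = (m - 1) * 2"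
    using qXp_count_all_invalid[of "[0..<m]" cv] \<open>m \<ge> 2\<close> by (simp add: qXp_calls_def)
next
  assume "m = 1"
  then show "qXp_calls cv [0..<m] = 1" by (simp add: qXp_calls_def qXp_count_singleton)
qed

end
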